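(* For a ternary cubic form $f$, $F_{6u}=0$ (identically in $u$) if and only if $f=a_xb_x^2$ for some linear forms $a_x$ and $b_x$.
   Context: Forms are homogeneous polynomials with complex coefficients in $x=(x_1,x_2,x_3)$; $u=(u_1,u_2,u_3)$ are indeterminates and $u_x=\sum u_ix_i$. The $n$-th transvectant is $J^n[f,g,h]=\big(\Omega^n(f(x)g(y)h(z))\big)|_{y=z=x}$, where $\Omega$ is the determinant of the operator matrix with rows $(\partial/\partial x_i)$, $(\partial/\partial y_i)$, $(\partial/\partial z_i)$, and $u$ is treated as constant. For a ternary cubic $f$ let $\theta=\tfrac14J^2[f,f,u_x^2]$ and $F_{6u}=\tfrac1{3072}J^2[\theta,\theta,u_x^2]$, a form of degree 6 in $u$. *)

theory Defs
  imports "HOL-Analysis.Analysis"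
begin

text \<open>Points of C^3 are vectors of type complex^3.  A form is represented by its
polynomial function C^3 -> C.\<close>

definition lin :: "complex^3 \<Rightarrow> complex^3 \<Rightarrow> complex" where
  "lin a x = (\<Sum>i\<in>UNIV. a$i * x$i)"

definition ternary_form :: "nat \<Rightarrow> (complex^3 \<Rightarrow> complex) \<Rightarrow> bool" where
  "ternary_form d f \<longleftrightarrow> (\<exists>c :: nat \<Rightarrow> nat \<Rightarrow> nat \<Rightarrow> complex.
     \<forall>x. f x = (\<Sum>(i,j,k)\<in>{(i,j,k). i + j + k = d}.
                   c i j k * x$1 ^ i * x$2 ^ j * x$3 ^ k))"

definition upd :: "complex^3 \<Rightarrow> 3 \<Rightarrow> complex \<Rightarrow> complex^3" where
  "upd x i t = (\<chi> j. if j = i then t else x$j)"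

type_synonym fun3 = "complex^3 \<Rightarrow> complex^3 \<Rightarrow> complex^3 \<Rightarrow> complex"

definition dX :: "3 \<Rightarrow> fun3 \<Rightarrow> fun3" where
  "dX i F = (\<lambda>x y z. deriv (\<lambda>t. F (upd x i t) y z) (x$i))"
definition dY :: "3 \<Rightarrow> fun3 \<Rightarrow> fun3" where
  "dY i F = (\<lambda>x y z. deriv (\<lambda>t. F x (upd y i t) z) (y$i))"
definition dZ :: "3 \<Rightarrow> fun3 \<Rightarrow> fun3" where
  "dZ i F = (\<lambda>x y z. deriv (\<lambda>t. F x y (upd z i t)) (z$i))"

definition Omega :: "fun3 \<Rightarrow> fun3" where
  "Omega F = (\<lambda>x y z. \<Sum>\<sigma>\<in>{\<sigma>. \<sigma> permutes (UNIV :: 3 set)}.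
      of_int (sign \<sigma>) * dX (\<sigma> 1) (dY (\<sigma> 2) (dZ (\<sigma> 3) F)) x y z)"

definition transvectant :: "nat \<Rightarrow> (complex^3 \<Rightarrow> complex) \<Rightarrow> (complex^3 \<Rightarrow> complex)
    \<Rightarrow> (complex^3 \<Rightarrow> complex) \<Rightarrow> complex^3 \<Rightarrow> complex" where
  "transvectant n f g h = (\<lambda>x. (Omega ^^ n) (\<lambda>x y z. f x * g y * h z) x x x)"

definition ux2 :: "complex^3 \<Rightarrow> complex^3 \<Rightarrow> complex" where
  "ux2 u = (\<lambda>x. (lin u x)^2)"

definition theta :: "(complex^3 \<Rightarrow> complex) \<Rightarrow> complex^3 \<Rightarrow> complex^3 \<Rightarrow> complex" where
  "theta f u = (\<lambda>x. (1/4) * transvectant 2 f f (ux2 u) x)"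

definition F6u :: "(complex^3 \<Rightarrow> complex) \<Rightarrow> complex^3 \<Rightarrow> complex^3 \<Rightarrow> complex" where
  "F6u f u = (\<lambda>x. (1/3072) * transvectant 2 (theta f u) (theta f u) (ux2 u) x)"

end

(* F6u is a covariant: under the substitution x \<mapsto> M x, u \<mapsto> u M it acquires the factor
   (det M)^6, so both sides of the equivalence are invariant under invertible linear changes
   of coordinates.  At u = e1 it is, up to the factor 1/16, the discriminant of the binary cubic
   f(0, y, z); hence F6u vanishes identically iff f restricts to every line with a repeated root.
   For f = a b^2 this follows from the explicit computation for x1 x2^2.  Conversely, move a
   point with f \<noteq> 0 to e3 and remove the x3^2-terms by a shear, so that
   f = k x3^3 + x3 Q(x1, x2) + C(x1, x2).  The discriminant condition on the lines through e3
   reads 4 Q^3 + 27 k C^2 = 0, and comparing coefficients forces Q = -3 k m^2 and C = 2 k m^3 for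
   a linear form m, i.e. f = k (x3 + 2 m) (x3 - m)^2. *)

theory Submission
  imports Defs
begin

definition partial_deriv :: "3 \<Rightarrow> (complex^3 \<Rightarrow> complex) \<Rightarrow> complex^3 \<Rightarrow> complex" where
  "partial_deriv i g = (\<lambda>x. deriv (\<lambda>t. g (upd x i t)) (x$i))"

inductive poly_fun :: "(complex^3 \<Rightarrow> complex) \<Rightarrow> bool" where
  poly_fun_const [simp, intro]: "poly_fun (\<lambda>x. c)"
| poly_fun_coord [simp, intro]: "poly_fun (\<lambda>x. x$j)"
| poly_fun_add [simp, intro]: "poly_fun f \<Longrightarrow> poly_fun g \<Longrightarrow> poly_fun (\<lambda>x. f x + g x)"
| poly_fun_mult [simp, intro]: "poly_fun f \<Longrightarrow> poly_fun g \<Longrightarrow> poly_fun (\<lambda>x. f x * g x)"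

lemma upd_nth [simp]: "upd x i t $ j = (if j = i then t else x$j)"
  by (simp add: upd_def)

lemma upd_same [simp]: "upd x i (x$i) = x"
  by (simp add: upd_def vec_eq_iff)

lemma poly_fun_field_differentiable:
  "poly_fun f \<Longrightarrow> (\<lambda>t. f (upd x i t)) field_differentiable (at t0)"
proof (induction arbitrary: t0 rule: poly_fun.induct)
  case (poly_fun_coord j)
  show ?case
    by (cases "j = i") (simp_all add: field_differentiable_ident)
qed (simp_all add: field_differentiable_add field_differentiable_mult)

lemma partial_deriv_const [simp]: "partial_deriv i (\<lambda>x. c) = (\<lambda>x. 0)"
  by (simp add: partial_deriv_def)

lemma partial_deriv_coord [simp]: "partial_deriv i (\<lambda>x. x$j) = (\<lambda>x. if j = i then 1 else 0)"
  by (rule ext) (simp add: partial_deriv_def)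

lemma partial_deriv_add [simp]:
  "poly_fun f \<Longrightarrow> poly_fun g \<Longrightarrow>
    partial_deriv i (\<lambda>x. f x + g x) = (\<lambda>x. partial_deriv i f x + partial_deriv i g x)"
  by (rule ext) (simp add: partial_deriv_def deriv_add poly_fun_field_differentiable)

lemma partial_deriv_mult [simp]:
  "poly_fun f \<Longrightarrow> poly_fun g \<Longrightarrow>
    partial_deriv i (\<lambda>x. f x * g x) = (\<lambda>x. partial_deriv i f x * g x + f x * partial_deriv i g x)"
  by (rule ext) (simp add: partial_deriv_def deriv_mult poly_fun_field_differentiable algebra_simps)

lemma poly_fun_partial_deriv [simp, intro]: "poly_fun f \<Longrightarrow> poly_fun (partial_deriv i f)"
  by (induction rule: poly_fun.induct) (simp_all add: if_distrib cong: if_cong)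

lemma poly_fun_sum [simp, intro]:
  "finite K \<Longrightarrow> (\<And>k. k \<in> K \<Longrightarrow> poly_fun (F k)) \<Longrightarrow> poly_fun (\<lambda>x. \<Sum>k\<in>K. F k x)"
  by (induction K rule: finite_induct) auto

lemma partial_deriv_sum:
  "finite K \<Longrightarrow> (\<And>k. k \<in> K \<Longrightarrow> poly_fun (F k)) \<Longrightarrow>
    partial_deriv i (\<lambda>x. \<Sum>k\<in>K. F k x) = (\<lambda>x. \<Sum>k\<in>K. partial_deriv i (F k) x)"
  by (induction K rule: finite_induct) auto

lemma poly_fun_uminus [simp, intro]: "poly_fun f \<Longrightarrow> poly_fun (\<lambda>x. - f x)"
  using poly_fun_mult[of "\<lambda>x. - 1" f] by simp

lemma partial_deriv_uminus [simp]:
  "poly_fun f \<Longrightarrow> partial_deriv i (\<lambda>x. - f x) = (\<lambda>x. - partial_deriv i f x)"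
  by (rule ext) (simp add: partial_deriv_def deriv_minus poly_fun_field_differentiable)

lemma poly_fun_diff [simp, intro]: "poly_fun f \<Longrightarrow> poly_fun g \<Longrightarrow> poly_fun (\<lambda>x. f x - g x)"
  using poly_fun_add[of f "\<lambda>x. - g x"] by simp

lemma partial_deriv_diff [simp]:
  "poly_fun f \<Longrightarrow> poly_fun g \<Longrightarrow>
    partial_deriv i (\<lambda>x. f x - g x) = (\<lambda>x. partial_deriv i f x - partial_deriv i g x)"
  by (rule ext) (simp add: partial_deriv_def deriv_diff poly_fun_field_differentiable)

lemma poly_fun_power [simp, intro]: "poly_fun f \<Longrightarrow> poly_fun (\<lambda>x. f x ^ n)"
  by (induction n) auto

lemma partial_deriv_power [simp]:
  "poly_fun f \<Longrightarrow>
    partial_deriv i (\<lambda>x. f x ^ n) = (\<lambda>x. of_nat n * f x ^ (n - 1) * partial_deriv i f x)"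
proof (induction n)
  case (Suc n)
  have "partial_deriv i (\<lambda>x. f x ^ Suc n) = partial_deriv i (\<lambda>x. f x * f x ^ n)"
    by simp
  with Suc show ?case
    by (cases n) (auto simp: algebra_simps)
qed simp

lemma matrix_vector_mult_nth: "(M *v x) $ j = (\<Sum>k\<in>UNIV. M$j$k * x$k)"
  by (simp add: matrix_vector_mult_def)

lemma poly_fun_comp: "poly_fun f \<Longrightarrow> poly_fun (\<lambda>x. f (M *v x))"
  by (induction rule: poly_fun.induct) (auto simp: matrix_vector_mult_nth)

lemma partial_deriv_comp:
  "poly_fun f \<Longrightarrow>
    partial_deriv i (\<lambda>x. f (M *v x)) = (\<lambda>x. \<Sum>j\<in>UNIV. M$j$i * partial_deriv j f (M *v x))"
proof (induction rule: poly_fun.induct)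
  case (poly_fun_coord j)
  show ?case
    unfolding matrix_vector_mult_nth by (subst partial_deriv_sum) (auto simp: if_distrib cong: if_cong)
next
  case (poly_fun_add f g)
  then show ?case
    by (simp add: poly_fun_comp sum.distrib algebra_simps)
next
  case (poly_fun_mult f g)
  then show ?case
    by (simp add: poly_fun_comp sum.distrib sum_distrib_left sum_distrib_right algebra_simps)
qed simp

section \<open>The second transvectant and its covariance\<close>

abbreviation perms3 :: "(3 \<Rightarrow> 3) set" where
  "perms3 \<equiv> {\<sigma>. \<sigma> permutes UNIV}"

definition alt3 :: "(3 \<Rightarrow> 3 \<Rightarrow> 3 \<Rightarrow> 'a::comm_ring_1) \<Rightarrow> 'a" where
  "alt3 h = (\<Sum>\<sigma>\<in>perms3. of_int (sign \<sigma>) * h (\<sigma> 1) (\<sigma> 2) (\<sigma> 3))"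

lemma alt3_expand:
  "alt3 h = h 1 2 3 - h 1 3 2 - h 2 1 3 + h 2 3 1 + h 3 1 2 - h 3 2 1"
proof -
  have f123: "finite {2::3, 3}" "1 \<notin> {2::3, 3}" and f23: "finite {3::3}" "2 \<notin> {3::3}"
    by auto
  show ?thesis
    unfolding alt3_def UNIV_3 sum_over_permutations_insert[OF f123]
      sum_over_permutations_insert[OF f23] permutes_sing
    by (simp add: sign_swap_id permutation_swap_id sign_compose sign_id swap_id_eq algebra_simps)
qed

lemma alt3_cmult: "alt3 (\<lambda>p q r. c * h p q r) = c * alt3 h"
  by (simp add: alt3_expand algebra_simps)

lemma alt3_sum: "alt3 (\<lambda>p q r. \<Sum>k\<in>K. h k p q r) = (\<Sum>k\<in>K. alt3 (h k))"
  unfolding alt3_def sum_distrib_left by (rule sum.swap)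

lemma alt3_swap:
  "alt3 (\<lambda>p q r. alt3 (\<lambda>p' q' r'. h p q r p' q' r')) = alt3 (\<lambda>p' q' r'. alt3 (\<lambda>p q r. h p q r p' q' r'))"
  by (simp add: alt3_expand algebra_simps)

lemma alt3_matrix_subst:
  fixes M :: "complex^3^3"
  shows "alt3 (\<lambda>p q r. (\<Sum>j\<in>UNIV. M$j$p * a j) * (\<Sum>j\<in>UNIV. M$j$q * b j) * (\<Sum>j\<in>UNIV. M$j$r * c j))
    = det M * alt3 (\<lambda>p q r. a p * b q * c r)"
  unfolding alt3_expand sum_3 det_3 by algebra

lemma Omega_alt3: "Omega F x y z = alt3 (\<lambda>i j k. dX i (dY j (dZ k F)) x y z)"
  by (simp add: Omega_def alt3_def)

lemma dX_sum_tensor: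
  "finite K \<Longrightarrow> (\<And>k. k \<in> K \<Longrightarrow> poly_fun (P k)) \<Longrightarrow>
    dX i (\<lambda>x y z. \<Sum>k\<in>K. P k x * Q k y * R k z)
      = (\<lambda>x y z. \<Sum>k\<in>K. partial_deriv i (P k) x * Q k y * R k z)"
proof (intro ext)
  fix x y z
  assume "finite K" "\<And>k. k \<in> K \<Longrightarrow> poly_fun (P k)"
  then have "partial_deriv i (\<lambda>x. \<Sum>k\<in>K. (Q k y * R k z) * P k x) x
      = (\<Sum>k\<in>K. partial_deriv i (P k) x * Q k y * R k z)"
    by (subst partial_deriv_sum) (auto simp: algebra_simps)
  then show "dX i (\<lambda>x y z. \<Sum>k\<in>K. P k x * Q k y * R k z) x y z
      = (\<Sum>k\<in>K. partial_deriv i (P k) x * Q k y * R k z)"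
    by (simp add: dX_def partial_deriv_def algebra_simps)
qed

lemma dY_sum_tensor:
  "finite K \<Longrightarrow> (\<And>k. k \<in> K \<Longrightarrow> poly_fun (Q k)) \<Longrightarrow>
    dY i (\<lambda>x y z. \<Sum>k\<in>K. P k x * Q k y * R k z)
      = (\<lambda>x y z. \<Sum>k\<in>K. P k x * partial_deriv i (Q k) y * R k z)"
proof (intro ext)
  fix x y z
  assume "finite K" "\<And>k. k \<in> K \<Longrightarrow> poly_fun (Q k)"
  then have "partial_deriv i (\<lambda>y. \<Sum>k\<in>K. (P k x * R k z) * Q k y) y
      = (\<Sum>k\<in>K. P k x * partial_deriv i (Q k) y * R k z)"
    by (subst partial_deriv_sum) (auto simp: algebra_simps)
  then show "dY i (\<lambda>x y z. \<Sum>k\<in>K. P k x * Q k y * R k z) x y z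
      = (\<Sum>k\<in>K. P k x * partial_deriv i (Q k) y * R k z)"
    by (simp add: dY_def partial_deriv_def algebra_simps)
qed

lemma dZ_sum_tensor:
  "finite K \<Longrightarrow> (\<And>k. k \<in> K \<Longrightarrow> poly_fun (R k)) \<Longrightarrow>
    dZ i (\<lambda>x y z. \<Sum>k\<in>K. P k x * Q k y * R k z)
      = (\<lambda>x y z. \<Sum>k\<in>K. P k x * Q k y * partial_deriv i (R k) z)"
proof (intro ext)
  fix x y z
  assume "finite K" "\<And>k. k \<in> K \<Longrightarrow> poly_fun (R k)"
  then have "partial_deriv i (\<lambda>z. \<Sum>k\<in>K. (P k x * Q k y) * R k z) z
      = (\<Sum>k\<in>K. P k x * Q k y * partial_deriv i (R k) z)"
    by (subst partial_deriv_sum) (auto simp: algebra_simps)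
  then show "dZ i (\<lambda>x y z. \<Sum>k\<in>K. P k x * Q k y * R k z) x y z
      = (\<Sum>k\<in>K. P k x * Q k y * partial_deriv i (R k) z)"
    by (simp add: dZ_def partial_deriv_def algebra_simps)
qed

lemma Omega_sum_tensor:
  assumes "finite K" "\<And>k. k \<in> K \<Longrightarrow> poly_fun (P k) \<and> poly_fun (Q k) \<and> poly_fun (R k)"
  shows "Omega (\<lambda>x y z. \<Sum>k\<in>K. P k x * Q k y * R k z) x y z =
     (\<Sum>k\<in>K. alt3 (\<lambda>i j l. partial_deriv i (P k) x * partial_deriv j (Q k) y * partial_deriv l (R k) z))"
proof -
  have "Omega (\<lambda>x y z. \<Sum>k\<in>K. P k x * Q k y * R k z) x y z =
      alt3 (\<lambda>i j l. \<Sum>k\<in>K. partial_deriv i (P k) x * partial_deriv j (Q k) y * partial_deriv l (R k) z)"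
    unfolding Omega_alt3 using assms by (simp add: dX_sum_tensor dY_sum_tensor dZ_sum_tensor)
  then show ?thesis
    by (simp add: alt3_sum)
qed

lemma transvectant2:
  assumes "poly_fun f" "poly_fun g" "poly_fun h"
  shows "transvectant 2 f g h x = alt3 (\<lambda>a1 a2 a3. alt3 (\<lambda>b1 b2 b3.
    partial_deriv b1 (partial_deriv a1 f) x * partial_deriv b2 (partial_deriv a2 g) x *
    partial_deriv b3 (partial_deriv a3 h) x))"
proof -
  have "Omega (\<lambda>x y z. f x * g y * h z) =
      (\<lambda>x y z. \<Sum>\<sigma>\<in>perms3. (of_int (sign \<sigma>) * partial_deriv (\<sigma> 1) f x) *
        partial_deriv (\<sigma> 2) g y * partial_deriv (\<sigma> 3) h z)"
    using Omega_sum_tensor[of "{()}" "\<lambda>_. f" "\<lambda>_. g" "\<lambda>_. h"] assms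
    by (intro ext) (simp add: alt3_def mult.assoc)
  then have "Omega (Omega (\<lambda>x y z. f x * g y * h z)) x x x =
      (\<Sum>\<sigma>\<in>perms3. alt3 (\<lambda>i j l. partial_deriv i (\<lambda>x. of_int (sign \<sigma>) * partial_deriv (\<sigma> 1) f x) x *
        partial_deriv j (partial_deriv (\<sigma> 2) g) x * partial_deriv l (partial_deriv (\<sigma> 3) h) x))"
    using assms by (simp add: Omega_sum_tensor finite_permutations)
  also have "\<dots> = alt3 (\<lambda>a1 a2 a3. alt3 (\<lambda>b1 b2 b3.
      partial_deriv b1 (partial_deriv a1 f) x * partial_deriv b2 (partial_deriv a2 g) x *
      partial_deriv b3 (partial_deriv a3 h) x))"
    using assms by (simp add: alt3_def sum_distrib_left mult_ac)
  finally show ?thesis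
    by (simp add: transvectant_def numeral_2_eq_2)
qed

lemma poly_fun_transvectant2 [simp, intro]:
  "poly_fun (transvectant 2 f g h)" if "poly_fun f" "poly_fun g" "poly_fun h"
  using that by (simp add: transvectant2[OF that, abs_def] alt3_expand)

lemma transvectant2_cmult:
  "poly_fun f \<Longrightarrow> poly_fun h \<Longrightarrow>
    transvectant 2 (\<lambda>x. c * f x) (\<lambda>x. c * f x) h x = c^2 * transvectant 2 f f h x"
  by (simp add: transvectant2 alt3_expand power2_eq_square algebra_simps)

lemma partial_deriv2_comp:
  assumes "poly_fun f"
  shows "partial_deriv t (partial_deriv s (\<lambda>x. f (M *v x))) x
    = (\<Sum>j\<in>UNIV. \<Sum>k\<in>UNIV. M$j$s * M$k$t * partial_deriv k (partial_deriv j f) (M *v x))"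
  using assms
  by (simp add: partial_deriv_comp partial_deriv_sum poly_fun_comp sum_distrib_left mult.assoc)

text \<open>The algebraic core of the covariance of \<open>J\<^sup>2\<close>: each of the two contractions contributes
  one factor \<open>det M\<close>.\<close>
lemma alt3_congruence:
  fixes M :: "complex^3^3" and X1 X2 X3 :: "3 \<Rightarrow> 3 \<Rightarrow> complex"
  shows "alt3 (\<lambda>s1 s2 s3. alt3 (\<lambda>t1 t2 t3.
      (\<Sum>j\<in>UNIV. \<Sum>k\<in>UNIV. M$j$s1 * M$k$t1 * X1 j k) *
      (\<Sum>j\<in>UNIV. \<Sum>k\<in>UNIV. M$j$s2 * M$k$t2 * X2 j k) *
      (\<Sum>j\<in>UNIV. \<Sum>k\<in>UNIV. M$j$s3 * M$k$t3 * X3 j k)))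
    = det M ^ 2 * alt3 (\<lambda>s1 s2 s3. alt3 (\<lambda>t1 t2 t3. X1 s1 t1 * X2 s2 t2 * X3 s3 t3))"
proof -
  define Y where "Y X s k = (\<Sum>j\<in>UNIV. M$j$s * X j k)" for X :: "3 \<Rightarrow> 3 \<Rightarrow> complex" and s k
  have swap: "(\<Sum>j\<in>UNIV. \<Sum>k\<in>UNIV. M$j$s * M$k$t * X j k) = (\<Sum>k\<in>UNIV. M$k$t * Y X s k)" for X s t
    unfolding Y_def by (subst sum.swap) (simp add: sum_distrib_left algebra_simps)
  have "alt3 (\<lambda>s1 s2 s3. alt3 (\<lambda>t1 t2 t3.
      (\<Sum>j\<in>UNIV. \<Sum>k\<in>UNIV. M$j$s1 * M$k$t1 * X1 j k) *
      (\<Sum>j\<in>UNIV. \<Sum>k\<in>UNIV. M$j$s2 * M$k$t2 * X2 j k) *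
      (\<Sum>j\<in>UNIV. \<Sum>k\<in>UNIV. M$j$s3 * M$k$t3 * X3 j k)))
    = alt3 (\<lambda>s1 s2 s3. det M * alt3 (\<lambda>t1 t2 t3. Y X1 s1 t1 * Y X2 s2 t2 * Y X3 s3 t3))"
    unfolding swap by (simp only: alt3_matrix_subst)
  also have "\<dots> = det M * alt3 (\<lambda>t1 t2 t3. alt3 (\<lambda>s1 s2 s3.
      (\<Sum>j\<in>UNIV. M$j$s1 * X1 j t1) * (\<Sum>j\<in>UNIV. M$j$s2 * X2 j t2) * (\<Sum>j\<in>UNIV. M$j$s3 * X3 j t3)))"
    unfolding alt3_cmult Y_def by (subst alt3_swap) (rule refl)
  also have "\<dots> = det M ^ 2 * alt3 (\<lambda>s1 s2 s3. alt3 (\<lambda>t1 t2 t3. X1 s1 t1 * X2 s2 t2 * X3 s3 t3))"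
    unfolding alt3_matrix_subst alt3_cmult by (subst alt3_swap) (simp add: power2_eq_square)
  finally show ?thesis .
qed

lemma transvectant2_comp:
  assumes "poly_fun f" "poly_fun g" "poly_fun h"
  shows "transvectant 2 (\<lambda>x. f (M *v x)) (\<lambda>x. g (M *v x)) (\<lambda>x. h (M *v x)) x
    = det M ^ 2 * transvectant 2 f g h (M *v x)"
  using assms by (simp add: transvectant2 poly_fun_comp partial_deriv2_comp alt3_congruence)

lemma lin_expand: "lin a x = a$1 * x$1 + a$2 * x$2 + a$3 * x$3"
  by (simp add: lin_def sum_3)

lemma lin_matrix_row: "lin (M $ j) x = (M *v x) $ j"
  by (simp add: lin_def matrix_vector_mult_nth)

lemma lin_vector_matrix_mult: "lin (v v* M) x = lin v (M *v x)"
  unfolding lin_expand by (simp add: matrix_vector_mult_nth vector_matrix_mult_def sum_3 algebra_simps)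

lemma ux2_vector_matrix_mult: "ux2 (v v* M) = (\<lambda>x. ux2 v (M *v x))"
  by (simp add: ux2_def lin_vector_matrix_mult)

lemma poly_fun_ux2 [simp, intro]: "poly_fun (ux2 v)"
  by (simp add: ux2_def lin_def)

lemma poly_fun_theta [simp, intro]: "poly_fun f \<Longrightarrow> poly_fun (theta f v)"
  unfolding theta_def by (intro poly_fun_mult poly_fun_const poly_fun_transvectant2) auto

lemma theta_comp:
  "poly_fun f \<Longrightarrow>
    theta (\<lambda>x. f (M *v x)) (v v* M) = (\<lambda>x. det M ^ 2 * theta f v (M *v x))"
  unfolding theta_def ux2_vector_matrix_mult by (simp add: transvectant2_comp)

lemma F6u_comp:
  assumes "poly_fun f"
  shows "F6u (\<lambda>x. f (M *v x)) (v v* M) x = det M ^ 6 * F6u f v (M *v x)"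
proof -
  have "F6u (\<lambda>x. f (M *v x)) (v v* M) x = 1/3072 *
      transvectant 2 (\<lambda>x. det M ^ 2 * theta f v (M *v x)) (\<lambda>x. det M ^ 2 * theta f v (M *v x))
        (\<lambda>x. ux2 v (M *v x)) x"
    unfolding F6u_def theta_comp[OF assms] ux2_vector_matrix_mult ..
  also have "\<dots> = 1/3072 * (det M ^ 2)^2 * (det M ^ 2 * transvectant 2 (theta f v) (theta f v) (ux2 v) (M *v x))"
    using assms by (simp add: transvectant2_cmult transvectant2_comp poly_fun_comp)
  also have "\<dots> = det M ^ 6 * F6u f v (M *v x)"
    by (simp add: F6u_def flip: power_mult power_add)
  finally show ?thesis .
qed

definition F6u_vanishes :: "(complex^3 \<Rightarrow> complex) \<Rightarrow> bool" where
  "F6u_vanishes f \<longleftrightarrow> (\<forall>u x. F6u f u x = 0)"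

definition lin_times_square :: "(complex^3 \<Rightarrow> complex) \<Rightarrow> bool" where
  "lin_times_square f \<longleftrightarrow> (\<exists>a b. \<forall>x. f x = lin a x * (lin b x)^2)"

lemma F6u_vanishes_comp:
  assumes "poly_fun f" "invertible M" "F6u_vanishes f"
  shows "F6u_vanishes (\<lambda>x. f (M *v x))"
  unfolding F6u_vanishes_def
proof (intro allI)
  fix u x
  obtain N where N: "N ** M = mat 1"
    using assms(2) unfolding invertible_def by blast
  have "(u v* N) v* M = u"
    by (simp add: vector_matrix_mul_assoc N)
  then show "F6u (\<lambda>x. f (M *v x)) u x = 0"
    using F6u_comp[OF assms(1), of M "u v* N" x] assms(3) by (simp add: F6u_vanishes_def)
qed

lemma lin_times_square_comp:
  assumes "invertible M" "lin_times_square (\<lambda>x. f (M *v x))"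
  shows "lin_times_square f"
proof -
  obtain a b where ab: "\<And>x. f (M *v x) = lin a x * (lin b x)^2"
    using assms(2) unfolding lin_times_square_def by blast
  obtain N where N: "M ** N = mat 1"
    using assms(1) unfolding invertible_def by blast
  have "f x = lin (a v* N) x * (lin (b v* N) x)^2" for x
    using ab[of "N *v x"] by (simp add: lin_vector_matrix_mult matrix_vector_mul_assoc N)
  then show ?thesis
    unfolding lin_times_square_def by blast
qed

lemma F6u_x1_x2_sq_e3: "F6u (\<lambda>x. x$1 * x$2^2) (axis 3 1) x = 0"
proof -
  have ux2: "ux2 (axis 3 1) = (\<lambda>x. (x$3)^2)"
    by (simp add: ux2_def lin_expand axis_def)
  have "theta (\<lambda>x. x$1 * x$2^2) (axis 3 1) = (\<lambda>x. -4 * (x$2)^2)"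
    by (rule ext) (simp add: theta_def transvectant2 alt3_expand ux2 power2_eq_square)
  then show ?thesis
    by (simp add: F6u_def transvectant2 alt3_expand ux2)
qed

lemma lin_times_square_imp_F6u_vanishes:
  assumes "lin_times_square f"
  shows "F6u_vanishes f"
  unfolding F6u_vanishes_def
proof (intro allI)
  fix u x
  obtain a b where ab: "\<And>x. f x = lin a x * (lin b x)^2"
    using assms unfolding lin_times_square_def by blast
  define B :: "complex^3^3" where "B = vector [a, b, u]"
  have f: "f = (\<lambda>x. (\<lambda>y. y$1 * y$2^2) (B *v x))"
    by (simp add: fun_eq_iff ab B_def flip: lin_matrix_row)
  have u: "axis 3 1 v* B = u"
    by (simp add: vec_eq_iff vector_matrix_mult_def B_def sum_3 axis_def forall_3)
  have "F6u f u x = det B ^ 6 * F6u (\<lambda>y. y$1 * y$2^2) (axis 3 1) (B *v x)"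
    unfolding f by (subst u[symmetric], rule F6u_comp) simp
  then show "F6u f u x = 0"
    by (simp add: F6u_x1_x2_sq_e3)
qed

abbreviation exponents3 :: "nat \<Rightarrow> (nat \<times> nat \<times> nat) set" where
  "exponents3 d \<equiv> {(i, j, k). i + j + k = d}"

definition monomial3 :: "nat \<times> nat \<times> nat \<Rightarrow> complex^3 \<Rightarrow> complex" where
  "monomial3 p x = (case p of (i, j, k) \<Rightarrow> x$1 ^ i * x$2 ^ j * x$3 ^ k)"

lemma finite_exponents3 [simp]: "finite (exponents3 d)"
  by (rule finite_subset[of _ "{0..d} \<times> {0..d} \<times> {0..d}"]) auto

lemma ternary_form_iff:
  "ternary_form d f \<longleftrightarrow> (\<exists>C. \<forall>x. f x = (\<Sum>p\<in>exponents3 d. C p * monomial3 p x))"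
proof
  assume "ternary_form d f"
  then obtain c where "\<forall>x. f x = (\<Sum>(i, j, k)\<in>exponents3 d. c i j k * x$1 ^ i * x$2 ^ j * x$3 ^ k)"
    unfolding ternary_form_def by blast
  then show "\<exists>C. \<forall>x. f x = (\<Sum>p\<in>exponents3 d. C p * monomial3 p x)"
    by (intro exI[of _ "\<lambda>(i, j, k). c i j k"]) (auto simp: monomial3_def mult.assoc intro!: sum.cong)
next
  assume "\<exists>C. \<forall>x. f x = (\<Sum>p\<in>exponents3 d. C p * monomial3 p x)"
  then obtain C where "\<forall>x. f x = (\<Sum>p\<in>exponents3 d. C p * monomial3 p x)"
    by blast
  then show "ternary_form d f"
    unfolding ternary_form_def
    by (intro exI[of _ "\<lambda>i j k. C (i, j, k)"]) (auto simp: monomial3_def mult.assoc intro!: sum.cong)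
qed

lemma poly_fun_monomial3 [simp, intro]: "poly_fun (monomial3 p)"
  by (cases p) (simp add: monomial3_def[abs_def])

lemma poly_fun_ternary_form:
  assumes "ternary_form d f"
  shows "poly_fun f"
proof -
  obtain C where "\<And>x. f x = (\<Sum>p\<in>exponents3 d. C p * monomial3 p x)"
    using assms unfolding ternary_form_iff by blast
  then have "f = (\<lambda>x. \<Sum>p\<in>exponents3 d. C p * monomial3 p x)"
    by (simp add: fun_eq_iff)
  then show ?thesis
    by simp
qed

lemma ternary_form_zero: "ternary_form d (\<lambda>x. 0)"
  unfolding ternary_form_iff by (intro exI[of _ "\<lambda>_. 0"]) simp

lemma ternary_form_add:
  "ternary_form d f \<Longrightarrow> ternary_form d g \<Longrightarrow> ternary_form d (\<lambda>x. f x + g x)"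
  unfolding ternary_form_iff
  by (elim exE, rename_tac C D, rule_tac x="\<lambda>p. C p + D p" in exI) (simp add: sum.distrib algebra_simps)

lemma ternary_form_cmult: "ternary_form d f \<Longrightarrow> ternary_form d (\<lambda>x. a * f x)"
  unfolding ternary_form_iff
  by (elim exE, rename_tac C, rule_tac x="\<lambda>p. a * C p" in exI) (simp add: sum_distrib_left algebra_simps)

lemma ternary_form_sum:
  "finite K \<Longrightarrow> (\<And>k. k \<in> K \<Longrightarrow> ternary_form d (F k)) \<Longrightarrow> ternary_form d (\<lambda>x. \<Sum>k\<in>K. F k x)"
  by (induction K rule: finite_induct) (auto intro: ternary_form_zero ternary_form_add)

lemma ternary_form_const: "ternary_form 0 (\<lambda>x. a)"
proof -
  have "exponents3 0 = {(0, 0, 0)}"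
    by auto
  then show ?thesis
    unfolding ternary_form_iff by (intro exI[of _ "\<lambda>_. a"]) (simp add: monomial3_def)
qed

lemma ternary_form_lin: "ternary_form 1 (lin m)"
proof -
  have "exponents3 1 = {(1, 0, 0), (0, 1, 0), (0, 0, 1)}"
    by auto
  then show ?thesis
    unfolding ternary_form_iff
    by (intro exI[of _ "\<lambda>(i, j, k). if i = 1 then m$1 else if j = 1 then m$2 else m$3"])
      (simp add: monomial3_def lin_expand)
qed

lemma ternary_form_mult:
  assumes "ternary_form a f" "ternary_form b g"
  shows "ternary_form (a + b) (\<lambda>x. f x * g x)"
proof -
  obtain C D where C: "\<And>x. f x = (\<Sum>p\<in>exponents3 a. C p * monomial3 p x)"
    and D: "\<And>x. g x = (\<Sum>q\<in>exponents3 b. D q * monomial3 q x)"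
    using assms unfolding ternary_form_iff by blast
  define add3 :: "nat \<times> nat \<times> nat \<Rightarrow> nat \<times> nat \<times> nat \<Rightarrow> nat \<times> nat \<times> nat" where
    "add3 p q = (case p of (i, j, k) \<Rightarrow> case q of (i', j', k') \<Rightarrow> (i + i', j + j', k + k'))" for p q
  have mon: "monomial3 (add3 p q) x = monomial3 p x * monomial3 q x" for p q x
    by (cases p; cases q) (simp add: monomial3_def add3_def power_add mult_ac)
  define E where "E P = (\<Sum>pq\<in>{pq \<in> exponents3 a \<times> exponents3 b. case_prod add3 pq = P}.
    case_prod (\<lambda>p q. C p * D q) pq)" for P
  have "f x * g x = (\<Sum>P\<in>exponents3 (a + b). E P * monomial3 P x)" for x
  proof -
    have "f x * g x = (\<Sum>(p, q)\<in>exponents3 a \<times> exponents3 b. C p * D q * monomial3 (add3 p q) x)"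
      unfolding C D sum_product sum.cartesian_product mon by (simp add: mult_ac)
    also have "\<dots> = (\<Sum>P\<in>exponents3 (a + b). \<Sum>pq\<in>{pq \<in> exponents3 a \<times> exponents3 b. case_prod add3 pq = P}.
        case_prod (\<lambda>p q. C p * D q * monomial3 (add3 p q) x) pq)"
      by (rule sum.group[symmetric]) (auto simp: add3_def)
    also have "\<dots> = (\<Sum>P\<in>exponents3 (a + b). E P * monomial3 P x)"
      unfolding E_def sum_distrib_right by (intro sum.cong refl) auto
    finally show ?thesis .
  qed
  then show ?thesis
    unfolding ternary_form_iff by blast
qed

lemma ternary_form_power: "ternary_form d f \<Longrightarrow> ternary_form (d * n) (\<lambda>x. f x ^ n)"
proof (induction n)
  case 0
  then show ?case
    using ternary_form_const[of 1] by simp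
next
  case (Suc n)
  then have "ternary_form (d + d * n) (\<lambda>x. f x * f x ^ n)"
    by (intro ternary_form_mult)
  then show ?case
    by (simp add: algebra_simps)
qed

lemma ternary_form_comp:
  assumes "ternary_form d f"
  shows "ternary_form d (\<lambda>x. f (M *v x))"
proof -
  obtain C where C: "\<And>x. f x = (\<Sum>p\<in>exponents3 d. C p * monomial3 p x)"
    using assms unfolding ternary_form_iff by blast
  have "ternary_form d (\<lambda>x. C p * monomial3 p (M *v x))" if p_exp: "p \<in> exponents3 d" for p
  proof -
    obtain i j k where p: "p = (i, j, k)" "i + j + k = d"
      using p_exp by (cases p) auto
    have "ternary_form (1 * i + 1 * j + 1 * k)
        (\<lambda>x. lin (M$1) x ^ i * lin (M$2) x ^ j * lin (M$3) x ^ k)"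
      by (intro ternary_form_mult ternary_form_power ternary_form_lin)
    then show ?thesis
      using p by (intro ternary_form_cmult) (simp add: monomial3_def lin_matrix_row)
  qed
  then show ?thesis
    unfolding C by (intro ternary_form_sum) auto
qed

definition cubic :: "(nat \<Rightarrow> nat \<Rightarrow> nat \<Rightarrow> complex) \<Rightarrow> complex^3 \<Rightarrow> complex" where
  "cubic c = (\<lambda>x. c 3 0 0 * x$1^3 + c 2 1 0 * x$1^2 * x$2 + c 2 0 1 * x$1^2 * x$3
    + c 1 2 0 * x$1 * x$2^2 + c 1 1 1 * x$1 * x$2 * x$3 + c 1 0 2 * x$1 * x$3^2
    + c 0 3 0 * x$2^3 + c 0 2 1 * x$2^2 * x$3 + c 0 1 2 * x$2 * x$3^2 + c 0 0 3 * x$3^3)"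

lemma ternary_form_3_cubic:
  assumes "ternary_form 3 f"
  obtains c where "f = cubic c"
proof -
  have exps: "exponents3 3 = {(3,0,0), (2,1,0), (2,0,1), (1,2,0), (1,1,1), (1,0,2), (0,3,0), (0,2,1),
      (0,1,2), (0,0,3)}"
  proof (intro set_eqI iffI)
    fix p assume "p \<in> exponents3 3"
    then obtain i j k where "p = (i, j, k)" "i + j + k = 3" "i \<le> 3" "j \<le> 3"
      by auto
    then show "p \<in> {(3,0,0), (2,1,0), (2,0,1), (1,2,0), (1,1,1), (1,0,2), (0,3,0), (0,2,1), (0,1,2), (0,0,3)}"
      by (cases i; cases j) (auto simp: numeral_3_eq_3)
  qed auto
  obtain c where "\<forall>x. f x = (\<Sum>(i, j, k)\<in>exponents3 3. c i j k * x$1 ^ i * x$2 ^ j * x$3 ^ k)"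
    using assms unfolding ternary_form_def by blast
  then have "f = cubic c"
    by (simp only: fun_eq_iff exps) (simp add: cubic_def algebra_simps)
  then show thesis
    by (rule that)
qed

section \<open>The covariant as a discriminant\<close>

text \<open>The discriminant of the binary cubic \<open>a y\<^sup>3 + b y\<^sup>2 z + c y z\<^sup>2 + d z\<^sup>3\<close>.\<close>
definition disc3 :: "complex \<Rightarrow> complex \<Rightarrow> complex \<Rightarrow> complex \<Rightarrow> complex" where
  "disc3 a b c d = b^2 * c^2 - 4 * a * c^3 - 4 * b^3 * d - 27 * a^2 * d^2 + 18 * a * b * c * d"

text \<open>At \<open>u = e\<^sub>1\<close> the covariant only sees the restriction of the cubic to the line
  \<open>x\<^sub>1 = 0\<close>, and there it is the discriminant of that binary cubic.\<close>
lemma F6u_cubic_e1: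
  "F6u (cubic c) (axis 1 1) y = 1/16 * disc3 (c 0 3 0) (c 0 2 1) (c 0 1 2) (c 0 0 3)"
proof -
  have ux2: "ux2 (axis 1 1) = (\<lambda>x. (x$1)^2)"
    by (simp add: ux2_def lin_expand axis_def)
  have theta: "theta (cubic c) (axis 1 1) = (\<lambda>x. -4*x$3^2*c 0 1 2^2 + 12*x$3^2*c 0 0 3*c 0 2 1
    - 4*x$2*x$3*c 0 1 2*c 0 2 1 + 36*x$2*x$3*c 0 0 3*c 0 3 0 - 4*x$2^2*c 0 2 1^2
    + 12*x$2^2*c 0 1 2*c 0 3 0 + 4*x$1*x$3*c 0 2 1*c 1 0 2 - 4*x$1*x$3*c 0 1 2*c 1 1 1
    + 12*x$1*x$3*c 0 0 3*c 1 2 0 + 12*x$1*x$2*c 0 3 0*c 1 0 2 - 4*x$1*x$2*c 0 2 1*c 1 1 1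
    + 4*x$1*x$2*c 0 1 2*c 1 2 0 - x$1^2*c 1 1 1^2 + 4*x$1^2*c 1 0 2*c 1 2 0)"
    unfolding theta_def
    by (rule ext, subst transvectant2) (simp_all add: cubic_def ux2 alt3_expand, algebra)
  show ?thesis
    unfolding F6u_def disc3_def theta
    by (subst transvectant2) (simp_all add: ux2 alt3_expand, algebra)
qed

lemma binary_cubic_coeffs_unique:
  fixes a b c d a' b' c' d' :: complex
  assumes "\<And>y z. a*y^3 + b*y^2*z + c*y*z^2 + d*z^3 = a'*y^3 + b'*y^2*z + c'*y*z^2 + d'*z^3"
  shows "a = a' \<and> b = b' \<and> c = c' \<and> d = d'"
proof -
  have a: "a = a'" and d: "d = d'"
    using assms[of 1 0] assms[of 0 1] by simp_all
  have "b + c = b' + c'" "c - b = c' - b'"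
    using assms[of 1 1] assms[of 1 "-1"] a d by (simp_all add: algebra_simps)
  then have "b = b'" "c = c'"
    by algebra+
  with a d show ?thesis
    by simp
qed

lemma F6u_vanishes_restriction_disc3:
  assumes "ternary_form 3 g" "F6u_vanishes g"
    and restr: "\<And>y z. g (vector [0, y, z]) = a*y^3 + b*y^2*z + c*y*z^2 + d*z^3"
  shows "disc3 a b c d = 0"
proof -
  obtain cg where g: "g = cubic cg"
    using assms(1) by (rule ternary_form_3_cubic)
  have "cg 0 3 0 = a \<and> cg 0 2 1 = b \<and> cg 0 1 2 = c \<and> cg 0 0 3 = d"
    using restr by (intro binary_cubic_coeffs_unique) (simp add: g cubic_def)
  moreover have "F6u g (axis 1 1) 0 = 0"
    using assms(2) by (simp add: F6u_vanishes_def)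
  ultimately show ?thesis
    by (simp add: g F6u_cubic_e1)
qed

section \<open>Binary forms with \<open>A\<^sup>3 = B\<^sup>2\<close>\<close>

lemma cube_eq_square_coeffs_lead:
  fixes a0 a1 a2 b0 b1 b2 b3 :: complex
  assumes E6: "b0^2 = a0^3"
    and E5: "2*b0*b1 = 3*a0^2*a1"
    and E4: "b1^2 + 2*b0*b2 = 3*a0^2*a2 + 3*a0*a1^2"
    and E3: "2*b0*b3 + 2*b1*b2 = a1^3 + 6*a0*a1*a2"
    and E2: "b2^2 + 2*b1*b3 = 3*a0*a2^2 + 3*a1^2*a2"
    and "a0 \<noteq> 0"
  shows "\<exists>m0 m1. a0 = m0^2 \<and> a1 = 2*m0*m1 \<and> a2 = m1^2 \<and>
    b0 = m0^3 \<and> b1 = 3*m0^2*m1 \<and> b2 = 3*m0*m1^2 \<and> b3 = m1^3"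
proof -
  obtain m0 where a0: "a0 = m0^2" and b0: "b0 = m0^3"
  proof -
    define w where "w = csqrt a0"
    have w2: "a0 = w^2"
      by (simp add: w_def)
    have "(b0 - w^3) * (b0 + w^3) = b0^2 - a0^3"
      unfolding w2 by algebra
    then have "b0 = w^3 \<or> b0 = (-w)^3"
      using E6 by (simp add: eq_neg_iff_add_eq_0)
    then show thesis
      using that w2 by (metis power2_minus)
  qed
  have m0: "m0 \<noteq> 0"
    using \<open>a0 \<noteq> 0\<close> a0 by simp
  define m1 where "m1 = a1 / (2*m0)"
  have a1: "a1 = 2*m0*m1"
    using m0 by (simp add: m1_def)
  have "2*m0^3*(b1 - 3*m0^2*m1) = 2*b0*b1 - 3*a0^2*a1"
    unfolding a0 b0 a1 by algebra
  then have b1: "b1 = 3*m0^2*m1"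
    using E5 m0 by simp
  define e where "e = a2/2 - m1^2/2"
  have a2: "a2 = m1^2 + 2*e"
    by (simp add: e_def right_diff_distrib)
  have "2*m0^3*(b2 - 3*m0*m1^2 - 3*m0*e) = b1^2 + 2*b0*b2 - 3*a0^2*a2 - 3*a0*a1^2"
    unfolding a0 b0 a1 b1 a2 by algebra
  then have b2: "b2 = 3*m0*m1^2 + 3*m0*e"
    using E4 m0 by (simp add: diff_diff_eq)
  have "2*m0^3*(b3 - m1^3 - 3*m1*e) = 2*b0*b3 + 2*b1*b2 - a1^3 - 6*a0*a1*a2"
    unfolding a0 b0 a1 b1 a2 b2 by algebra
  then have b3: "b3 = m1^3 + 3*m1*e"
    using E3 m0 by (simp add: diff_diff_eq)
  have "-3*m0^2*e^2 = b2^2 + 2*b1*b3 - 3*a0*a2^2 - 3*a1^2*a2"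
    unfolding a0 a1 b1 a2 b2 b3 by algebra
  then have "e = 0"
    using E2 m0 by simp
  with a0 a1 a2 b0 b1 b2 b3 show ?thesis
    by (intro exI[of _ m0] exI[of _ m1]) simp
qed

lemma cube_eq_square_coeffs:
  fixes a0 a1 a2 b0 b1 b2 b3 :: complex
  assumes E6: "b0^2 = a0^3"
    and E5: "2*b0*b1 = 3*a0^2*a1"
    and E4: "b1^2 + 2*b0*b2 = 3*a0^2*a2 + 3*a0*a1^2"
    and E3: "2*b0*b3 + 2*b1*b2 = a1^3 + 6*a0*a1*a2"
    and E2: "b2^2 + 2*b1*b3 = 3*a0*a2^2 + 3*a1^2*a2"
    and E1: "2*b2*b3 = 3*a1*a2^2"
    and E0: "b3^2 = a2^3"
  shows "\<exists>m0 m1. a0 = m0^2 \<and> a1 = 2*m0*m1 \<and> a2 = m1^2 \<and>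
    b0 = m0^3 \<and> b1 = 3*m0^2*m1 \<and> b2 = 3*m0*m1^2 \<and> b3 = m1^3"
proof -
  consider "a0 \<noteq> 0" | "a0 = 0" "a2 \<noteq> 0" | "a0 = 0" "a2 = 0"
    by blast
  then show ?thesis
  proof cases
    case 1
    then show ?thesis
      using cube_eq_square_coeffs_lead[OF E6 E5 E4 E3 E2] by blast
  next
    case 2
    text \<open>Reverse the roles of the two variables.\<close>
    obtain m0 m1 where "a2 = m0^2 \<and> a1 = 2*m0*m1 \<and> a0 = m1^2 \<and>
        b3 = m0^3 \<and> b2 = 3*m0^2*m1 \<and> b1 = 3*m0*m1^2 \<and> b0 = m1^3"
      using cube_eq_square_coeffs_lead[of b3 a2 b2 a1 b1 a0 b0] 2 E0 E1 E2 E3 E4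
      by (auto simp: algebra_simps)
    then show ?thesis
      by (intro exI[of _ m1] exI[of _ m0]) (auto simp: algebra_simps)
  next
    case 3
    then have "b0 = 0" "b3 = 0"
      using E6 E0 by simp_all
    with 3 E4 E2 have "b1 = 0" "b2 = 0"
      by simp_all
    with 3 \<open>b0 = 0\<close> \<open>b3 = 0\<close> E3 show ?thesis
      by (intro exI[of _ 0]) simp
  qed
qed

lemma cube_eq_square_binary:
  fixes a0 a1 a2 b0 b1 b2 b3 :: complex
  assumes "\<And>t. (a0*t^2 + a1*t + a2)^3 = (b0*t^3 + b1*t^2 + b2*t + b3)^2"
  shows "\<exists>m0 m1. a0 = m0^2 \<and> a1 = 2*m0*m1 \<and> a2 = m1^2 \<and>
    b0 = m0^3 \<and> b1 = 3*m0^2*m1 \<and> b2 = 3*m0*m1^2 \<and> b3 = m1^3"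
proof -
  define q where "q = [: b3^2 - a2^3, 2*b2*b3 - 3*a1*a2^2, b2^2 + 2*b1*b3 - 3*a0*a2^2 - 3*a1^2*a2,
    2*b0*b3 + 2*b1*b2 - a1^3 - 6*a0*a1*a2, b1^2 + 2*b0*b2 - 3*a0^2*a2 - 3*a0*a1^2,
    2*b0*b1 - 3*a0^2*a1, b0^2 - a0^3 :]"
  have "poly q t = (b0*t^3 + b1*t^2 + b2*t + b3)^2 - (a0*t^2 + a1*t + a2)^3" for t
    unfolding q_def by simp algebra
  then have "q = 0"
    using assms poly_all_0_iff_0 by auto
  then show ?thesis
    unfolding q_def by (intro cube_eq_square_coeffs) (simp_all add: pCons_eq_0_iff diff_eq_eq add_ac)
qed

section \<open>Normal form of a cubic and the hard direction\<close>

lemma matrix3_mult_vector: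
  fixes x :: "'a::comm_ring_1^3"
  shows "(vector [vector [a11, a12, a13], vector [a21, a22, a23], vector [a31, a32, a33]] :: 'a^3^3) *v x
    = vector [a11 * x$1 + a12 * x$2 + a13 * x$3, a21 * x$1 + a22 * x$2 + a23 * x$3,
        a31 * x$1 + a32 * x$2 + a33 * x$3]"
  by (simp add: vec_eq_iff forall_3 matrix_vector_mult_nth sum_3)

lemma invertible_matrix3_iff:
  "invertible (vector [vector [a11, a12, a13], vector [a21, a22, a23], vector [a31, a32, a33]] :: complex^3^3)
    \<longleftrightarrow> a11*a22*a33 - a11*a23*a32 - a12*a21*a33 + a12*a23*a31 + a13*a21*a32 - a13*a22*a31 \<noteq> 0"
  by (simp add: invertible_det_nz det_3 algebra_simps)

lemma ex_invertible_image_e3: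
  fixes x0 :: "complex^3"
  assumes "x0 \<noteq> 0"
  shows "\<exists>A :: complex^3^3. invertible A \<and> A *v axis 3 1 = x0"
proof -
  have col3: "(vector [vector [a, b, x0$1], vector [c, d, x0$2], vector [e, g, x0$3]] :: complex^3^3)
      *v axis 3 1 = x0"
    for a b c d e g :: complex
    by (simp add: matrix3_mult_vector axis_def vec_eq_iff forall_3)
  have "x0$1 \<noteq> 0 \<or> x0$2 \<noteq> 0 \<or> x0$3 \<noteq> 0"
    using assms by (metis exhaust_3 vec_eq_iff zero_index)
  then consider "x0$1 \<noteq> 0" | "x0$2 \<noteq> 0" | "x0$3 \<noteq> 0"
    by blast
  then show ?thesis
  proof cases
    case 1
    then show ?thesis
      by (intro exI[of _ "vector [vector [0, 0, x0$1], vector [1, 0, x0$2], vector [0, 1, x0$3]]"])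
        (simp add: invertible_matrix3_iff col3)
  next
    case 2
    then show ?thesis
      by (intro exI[of _ "vector [vector [1, 0, x0$1], vector [0, 0, x0$2], vector [0, 1, x0$3]]"])
        (simp add: invertible_matrix3_iff col3)
  next
    case 3
    then show ?thesis
      by (intro exI[of _ "vector [vector [1, 0, x0$1], vector [0, 1, x0$2], vector [0, 0, x0$3]]"])
        (simp add: invertible_matrix3_iff col3)
  qed
qed

lemma cubic_depress:
  assumes "c 0 0 3 \<noteq> 0"
  obtains T :: "complex^3^3" and q0 q1 q2 s0 s1 s2 s3 where "invertible T"
    "\<And>x. cubic c (T *v x) = c 0 0 3 * x$3^3 + x$3 * (q0*x$1^2 + q1*x$1*x$2 + q2*x$2^2)
      + (s0*x$1^3 + s1*x$1^2*x$2 + s2*x$1*x$2^2 + s3*x$2^3)"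
proof -
  define k where "k = c 0 0 3"
  define la where "la = - c 1 0 2 / (3*k)"
  define mu where "mu = - c 0 1 2 / (3*k)"
  have la: "c 1 0 2 = -3*k*la" and mu: "c 0 1 2 = -3*k*mu"
    using assms by (simp_all add: k_def la_def mu_def)
  define T :: "complex^3^3" where "T = vector [vector [1, 0, 0], vector [0, 1, 0], vector [la, mu, 1]]"
  have "invertible T"
    by (simp add: T_def invertible_matrix3_iff)
  moreover have "cubic c (T *v x) = k * x$3^3
    + x$3 * ((c 2 0 1 - 3*k*la^2)*x$1^2 + (c 1 1 1 - 6*k*la*mu)*x$1*x$2 + (c 0 2 1 - 3*k*mu^2)*x$2^2)
    + ((c 3 0 0 + la*c 2 0 1 - 2*k*la^3)*x$1^3 + (c 2 1 0 + la*c 1 1 1 + mu*c 2 0 1 - 6*k*la^2*mu)*x$1^2*x$2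
      + (c 1 2 0 + la*c 0 2 1 + mu*c 1 1 1 - 6*k*la*mu^2)*x$1*x$2^2 + (c 0 3 0 + mu*c 0 2 1 - 2*k*mu^3)*x$2^3)"
    for x
    unfolding cubic_def T_def matrix3_mult_vector vector_3 la mu k_def[symmetric] by algebra
  ultimately show thesis
    using that unfolding k_def by blast
qed

text \<open>The restrictions of \<open>f\<close> to the lines through \<open>e\<^sub>3\<close> have vanishing discriminant.\<close>
lemma F6u_vanishes_depressed_cubic_disc:
  assumes "ternary_form 3 f" "F6u_vanishes f" "k \<noteq> 0"
    and f: "\<And>x. f x = k * x$3^3 + x$3 * (q0*x$1^2 + q1*x$1*x$2 + q2*x$2^2)
      + (s0*x$1^3 + s1*x$1^2*x$2 + s2*x$1*x$2^2 + s3*x$2^3)"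
  shows "4 * (q0*t^2 + q1*t + q2)^3 + 27*k * (s0*t^3 + s1*t^2 + s2*t + s3)^2 = 0"
proof -
  define Q where "Q = q0*t^2 + q1*t + q2"
  define C where "C = s0*t^3 + s1*t^2 + s2*t + s3"
  define R :: "complex^3^3" where "R = vector [vector [1, t, 0], vector [0, 1, 0], vector [0, 0, 1]]"
  have R: "invertible R"
    by (simp add: R_def invertible_matrix3_iff)
  have "disc3 C Q 0 k = 0"
  proof (rule F6u_vanishes_restriction_disc3)
    show "ternary_form 3 (\<lambda>x. f (R *v x))"
      using assms(1) by (rule ternary_form_comp)
    show "F6u_vanishes (\<lambda>x. f (R *v x))"
      using poly_fun_ternary_form[OF assms(1)] R assms(2) by (rule F6u_vanishes_comp)
    show "f (R *v vector [0, y, z]) = C * y^3 + Q * y^2 * z + 0 * y * z^2 + k * z^3" for y z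
      by (simp add: f R_def Q_def C_def matrix3_mult_vector) algebra
  qed
  moreover have "disc3 C Q 0 k = - k * (4 * Q^3 + 27*k * C^2)"
    by (simp add: disc3_def power2_eq_square power3_eq_cube algebra_simps)
  ultimately show ?thesis
    using \<open>k \<noteq> 0\<close> by (simp add: Q_def C_def)
qed

lemma depressed_cubic_lin_times_square:
  assumes "ternary_form 3 f" "F6u_vanishes f" "k \<noteq> 0"
    and f: "\<And>x. f x = k * x$3^3 + x$3 * (q0*x$1^2 + q1*x$1*x$2 + q2*x$2^2)
      + (s0*x$1^3 + s1*x$1^2*x$2 + s2*x$1*x$2^2 + s3*x$2^3)"
  shows "lin_times_square f"
proof -
  define Q where "Q t = q0*t^2 + q1*t + q2" for t
  define C where "C t = s0*t^3 + s1*t^2 + s2*t + s3" for t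
  have disc: "4 * Q t^3 + 27*k * C t^2 = 0" for t
    unfolding Q_def C_def using assms by (rule F6u_vanishes_depressed_cubic_disc)
  have "(-Q t/(3*k))^3 = (C t/(2*k))^2" for t
  proof -
    have "Q t^3 = -(27*k * C t^2)/4"
      using disc[of t] by (simp add: eq_neg_iff_add_eq_0 field_simps)
    with \<open>k \<noteq> 0\<close> show ?thesis
      by (simp add: power_divide field_simps) algebra
  qed
  then have "((-q0/(3*k))*t^2 + (-q1/(3*k))*t + (-q2/(3*k)))^3
      = ((s0/(2*k))*t^3 + (s1/(2*k))*t^2 + (s2/(2*k))*t + s3/(2*k))^2" for t
    unfolding Q_def C_def by (simp add: add_divide_distrib diff_divide_distrib)
  then obtain m0 m1 where m: "-q0/(3*k) = m0^2" "-q1/(3*k) = 2*m0*m1" "-q2/(3*k) = m1^2"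
    "s0/(2*k) = m0^3" "s1/(2*k) = 3*m0^2*m1" "s2/(2*k) = 3*m0*m1^2" "s3/(2*k) = m1^3"
    using cube_eq_square_binary by blast
  then have qs: "q0 = -3*k*m0^2" "q1 = -6*k*m0*m1" "q2 = -3*k*m1^2"
    "s0 = 2*k*m0^3" "s1 = 6*k*m0^2*m1" "s2 = 6*k*m0*m1^2" "s3 = 2*k*m1^3"
    using \<open>k \<noteq> 0\<close>
    by (simp_all add: field_simps minus_equation_iff[of q0] minus_equation_iff[of q1]
        minus_equation_iff[of q2])
  have "f x = lin (vector [2*k*m0, 2*k*m1, k]) x * (lin (vector [-m0, -m1, 1]) x)^2" for x
    unfolding f lin_expand qs by simp algebra
  then show ?thesis
    unfolding lin_times_square_def by blast
qed

lemma F6u_vanishes_imp_lin_times_square: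
  assumes f: "ternary_form 3 f" and "F6u_vanishes f"
  shows "lin_times_square f"
proof (cases "\<forall>x. f x = 0")
  case True
  then show ?thesis
    unfolding lin_times_square_def by (intro exI[of _ 0]) (simp add: lin_def)
next
  case False
  then obtain x0 where fx0: "f x0 \<noteq> 0"
    by blast
  obtain c0 where "f = cubic c0"
    using f by (rule ternary_form_3_cubic)
  then have "x0 \<noteq> 0"
    using fx0 by (auto simp: cubic_def)
  then obtain A :: "complex^3^3" where A: "invertible A" "A *v axis 3 1 = x0"
    using ex_invertible_image_e3 by blast
  obtain c where c: "(\<lambda>x. f (A *v x)) = cubic c"
    using ternary_form_comp[OF f] by (rule ternary_form_3_cubic)
  have "c 0 0 3 = f x0"
    using fun_cong[OF c, of "axis 3 1"] A(2) by (simp add: cubic_def axis_def)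
  with fx0 have k: "c 0 0 3 \<noteq> 0"
    by simp
  obtain T :: "complex^3^3" and q0 q1 q2 s0 s1 s2 s3 where T: "invertible T"
    "\<And>x. cubic c (T *v x) = c 0 0 3 * x$3^3 + x$3 * (q0*x$1^2 + q1*x$1*x$2 + q2*x$2^2)
      + (s0*x$1^3 + s1*x$1^2*x$2 + s2*x$1*x$2^2 + s3*x$2^3)"
    using cubic_depress[of c, OF k] by blast
  have AT: "invertible (A ** T)"
    using A(1) T(1) by (rule invertible_mult)
  have "f ((A ** T) *v x) = c 0 0 3 * x$3^3 + x$3 * (q0*x$1^2 + q1*x$1*x$2 + q2*x$2^2)
      + (s0*x$1^3 + s1*x$1^2*x$2 + s2*x$1*x$2^2 + s3*x$2^3)" for x
    using fun_cong[OF c, of "T *v x"] T(2)[of x] by (simp add: matrix_vector_mul_assoc)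
  with ternary_form_comp[OF f] F6u_vanishes_comp[OF poly_fun_ternary_form[OF f] AT assms(2)] k
  have "lin_times_square (\<lambda>x. f ((A ** T) *v x))"
    by (rule depressed_cubic_lin_times_square)
  with AT show ?thesis
    by (rule lin_times_square_comp)
qed

theorem lemma7p2:
  fixes f :: "complex^3 \<Rightarrow> complex"
  assumes "ternary_form 3 f"
  shows "(\<forall>u x. F6u f u x = 0) \<longleftrightarrow> (\<exists>a b. \<forall>x. f x = lin a x * (lin b x)^2)"
  unfolding F6u_vanishes_def[symmetric] lin_times_square_def[symmetric]
  using F6u_vanishes_imp_lin_times_square[OF assms] lin_times_square_imp_F6u_vanishes by blast

end
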